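(* Let $p$ be a prime and $b$ an integer with $0<b<\frac{p-1}{2}$. Then $(p-b)(p-b^{-1})=2p+1$ if and only if $\frac{p-1}{3}\in\mathbb{Z}$ and $b=\frac{p-1}{3}$.
   Context: $b^{-1}$ is the unique integer $0<b^{-1}<p$ with $bb^{-1}\equiv1\pmod p$. *)

theory Defs
  imports "HOL-Number_Theory.Number_Theory"
begin

definition inv_mod :: "int \<Rightarrow> int \<Rightarrow> int" where
  "inv_mod p b = (THE c. 0 < c \<and> c < p \<and> [b * c = 1] (mod p))"

end

theory Submission
  imports Defs
begin

(* With x = p - b, the hypothesis b < (p - 1)/2 puts x strictly between (p + 1)/2 and p,
   so the only cofactor y with x * y = 2p + 1 can be 3 (1 is too small, 2 has the wrong
   parity, 4 is too big); this forces p = 3b + 1.  Conversely, for p = 3b + 1 the inverse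
   of b is 3b - 2 = p - 3, as b (3b - 2) - 1 = p (b - 1). *)

lemma inv_mod_eqI:
  fixes p b d :: int
  assumes "0 < d" "d < p" "[b * d = 1] (mod p)"
  shows "inv_mod p b = d"
  unfolding inv_mod_def
proof (rule the_equality)
  show "0 < d \<and> d < p \<and> [b * d = 1] (mod p)" using assms by blast
next
  fix c assume c: "0 < c \<and> c < p \<and> [b * c = 1] (mod p)"
  have "[c = c * (b * d)] (mod p)"
    using cong_scalar_left[OF assms(3), of c] by (simp add: cong_sym)
  also have "c * (b * d) = (b * c) * d" by (simp add: ac_simps)
  also have "[(b * c) * d = d] (mod p)"
    using cong_scalar_right[of "b * c" 1 p d] c by simp
  finally have "[c = d] (mod p)" .
  then show "c = d" using c assms by (intro cong_less_imp_eq_int) auto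
qed

lemma cofactor_eq_3:
  fixes x y p :: int
  assumes prod: "x * y = 2 * p + 1" and "p + 1 < 2 * x" and "x \<le> p"
  shows "y = 3"
proof -
  have "0 < x" using assms(2,3) by linarith
  moreover have "0 < x * y" using prod assms(2,3) by linarith
  ultimately have "0 < y" using zero_less_mult_pos by blast
  moreover have "y \<noteq> 1" using prod assms(3) \<open>0 < x\<close> by auto
  moreover have "y \<noteq> 2"
  proof
    assume "y = 2"
    with prod have "2 * x = 2 * p + 1" by (simp add: mult.commute)
    then show False by presburger
  qed
  moreover have "y < 4"
  proof (rule ccontr)
    assume "\<not> y < 4"
    then have "x * 4 \<le> x * y" using \<open>0 < x\<close> by (intro mult_left_mono) auto
    then show False using prod assms(2) by linarith
  qed
  ultimately show "y = 3" by linarith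
qed

theorem lemma5p3:
  fixes p b :: int
  assumes "prime p" and "0 < b" and "real_of_int b < (real_of_int p - 1) / 2"
  shows "(p - b) * (p - inv_mod p b) = 2 * p + 1 \<longleftrightarrow>
           (3 dvd (p - 1) \<and> b = (p - 1) div 3)"
proof
  have "real_of_int (2 * b) < real_of_int (p - 1)" using assms(3) by simp
  then have "2 * b < p - 1" by (simp only: of_int_less_iff)
  assume h: "(p - b) * (p - inv_mod p b) = 2 * p + 1"
  have "p - inv_mod p b = 3"
    using \<open>2 * b < p - 1\<close> assms(2) by (intro cofactor_eq_3[OF h]) auto
  with h have "p = 3 * b + 1" by simp
  then show "3 dvd (p - 1) \<and> b = (p - 1) div 3" by simp
next
  assume "3 dvd (p - 1) \<and> b = (p - 1) div 3"
  then have p: "p = 3 * b + 1" by auto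
  have "b * (3 * b - 2) - 1 = p * (b - 1)" using p by (simp add: algebra_simps)
  then have "[b * (3 * b - 2) = 1] (mod p)" by (simp add: cong_iff_dvd_diff)
  then have "inv_mod p b = 3 * b - 2" using assms(2) p by (intro inv_mod_eqI) auto
  then show "(p - b) * (p - inv_mod p b) = 2 * p + 1" using p by simp
qed

end
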